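(* Let $\mathcal{X}$ be an SP which satisfies NUPBR$_{\rm loc}$. Then for any random variable $\tau:\Omega\to[0,\infty)$ taking at most countably many values, the set $\mathcal{X}_\tau=\{X_\tau:X\in\mathcal{X}\}$ is bounded in $L^0$.
   Context: Work on a filtered probability space $(\Omega,\mathcal{F},\mathbb{F},P)$, $\mathbb{F}=(\mathcal{F}_t)_{t\ge0}$ satisfying the usual conditions, $\mathcal{F}_0$ trivial; convention $0/0=1$. A set of processes (SP) is a set $\mathcal{X}$ of processes such that: (A) each $X\in\mathcal{X}$ is an adapted, nonnegative, $P$-a.s. right-continuous process on $[0,\infty)$ with $X_0=1$; (C) for $X,X'\in\mathcal{X}$ and $\alpha\in[0,1]$, $(1-\alpha)X+\alpha X'\in\mathcal{X}$; (D) for all $t\in[0,\infty)$, $A\in\mathcal{F}_t$, $X\in\mathcal{X}$ and $X'\in\mathcal{X}$ with $\{X'_t=0\}\subseteq\{X_t=0\}$ on $A$, the process $I_{A^c}X_\cdot + I_A (X_{t\wedge\cdot}/X'_t)X'_{t\vee\cdot}$ belongs to $\mathcal{X}$. NUPBR$_{\rm loc}$: for every $t\in[0,\infty)$, $\mathcal{X}_t=\{X_t:X\in\mathcal{X}\}$ is bounded in $L^0$. *)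

theory Defs
  imports "HOL-Probability.Probability"
begin

definition divc :: "real \<Rightarrow> real \<Rightarrow> real" where
  "divc a b = (if a = 0 \<and> b = 0 then 1 else a / b)"

definition usual_filtered_prob_space :: "'a measure \<Rightarrow> (real \<Rightarrow> 'a measure) \<Rightarrow> bool" where
  "usual_filtered_prob_space M F \<longleftrightarrow>
     prob_space M \<and>
     (\<forall>N\<in>null_sets M. \<forall>B. B \<subseteq> N \<longrightarrow> B \<in> sets M) \<and>
     (\<forall>t\<ge>0. space (F t) = space M \<and> sets (F t) \<subseteq> sets M) \<and>
     (\<forall>s t. 0 \<le> s \<longrightarrow> s \<le> t \<longrightarrow> sets (F s) \<subseteq> sets (F t)) \<and>
     (\<forall>t\<ge>0. sets (F t) = (\<Inter>u\<in>{t<..}. sets (F u))) \<and>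
     null_sets M \<subseteq> sets (F 0) \<and>
     (\<forall>A\<in>sets (F 0). measure M A = 0 \<or> measure M A = 1)"

definition paste :: "real \<Rightarrow> 'a set \<Rightarrow> (real \<Rightarrow> 'a \<Rightarrow> real) \<Rightarrow> (real \<Rightarrow> 'a \<Rightarrow> real)
    \<Rightarrow> (real \<Rightarrow> 'a \<Rightarrow> real)" where
  "paste t A X X' = (\<lambda>s \<omega>. if \<omega> \<in> A
      then (if s \<le> t then X s \<omega> else divc (X t \<omega>) (X' t \<omega>) * X' s \<omega>)
      else X s \<omega>)"

definition set_of_processes ::
  "'a measure \<Rightarrow> (real \<Rightarrow> 'a measure) \<Rightarrow> (real \<Rightarrow> 'a \<Rightarrow> real) set \<Rightarrow> bool" where
  "set_of_processes M F \<X> \<longleftrightarrow>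
     (\<forall>X\<in>\<X>.
        (\<forall>t\<ge>0. X t \<in> borel_measurable (F t)) \<and>
        (\<forall>t\<ge>0. \<forall>\<omega>\<in>space M. X t \<omega> \<ge> 0) \<and>
        (AE \<omega> in M. \<forall>t\<ge>0. continuous (at_right t) (\<lambda>s. X s \<omega>)) \<and>
        (\<forall>\<omega>\<in>space M. X 0 \<omega> = 1)) \<and>
     (\<forall>X\<in>\<X>. \<forall>X'\<in>\<X>. \<forall>\<alpha>::real. 0 \<le> \<alpha> \<longrightarrow> \<alpha> \<le> 1 \<longrightarrow>
        (\<lambda>s \<omega>. (1 - \<alpha>) * X s \<omega> + \<alpha> * X' s \<omega>) \<in> \<X>) \<and>
     (\<forall>t\<ge>0. \<forall>A\<in>sets (F t). \<forall>X\<in>\<X>. \<forall>X'\<in>\<X>.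
        (\<forall>\<omega>\<in>A. X' t \<omega> = 0 \<longrightarrow> X t \<omega> = 0) \<longrightarrow> paste t A X X' \<in> \<X>)"

definition bounded_L0 :: "'a measure \<Rightarrow> ('a \<Rightarrow> real) set \<Rightarrow> bool" where
  "bounded_L0 M S \<longleftrightarrow>
     (\<forall>e>0. \<exists>c. \<forall>Y\<in>S. measure M {\<omega>\<in>space M. \<bar>Y \<omega>\<bar> > c} \<le> e)"

definition NUPBR_loc :: "'a measure \<Rightarrow> (real \<Rightarrow> 'a \<Rightarrow> real) set \<Rightarrow> bool" where
  "NUPBR_loc M \<X> \<longleftrightarrow> (\<forall>t\<ge>0. bounded_L0 M {X t | X. X \<in> \<X>})"

end

theory Submission
  imports Defs
begin

text \<open>Outside an event of small probability a countably-valued time \<open>\<tau>\<close> takes one of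
  finitely many values. At each of these deterministic times the set \<open>\<X>\<^sub>t\<close> is bounded
  in \<open>L\<^sup>0\<close> by NUPBR_loc, and a finite union of \<open>L\<^sup>0\<close>-bounded sets is again bounded.\<close>

context prob_space
begin

lemma bounded_L0_UN_finite:
  assumes "finite I"
    and "\<And>i. i \<in> I \<Longrightarrow> bounded_L0 M (S i)"
    and "\<And>i. i \<in> I \<Longrightarrow> S i \<subseteq> borel_measurable M"
  shows "bounded_L0 M (\<Union>i\<in>I. S i)"
  unfolding bounded_L0_def
proof (intro allI impI)
  fix e :: real assume "e > 0"
  then have "\<forall>i\<in>I. \<exists>c. \<forall>Y\<in>S i. prob {\<omega>\<in>space M. \<bar>Y \<omega>\<bar> > c} \<le> e"
    using assms(2) unfolding bounded_L0_def by blast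
  then obtain c where c: "\<And>i Y. i \<in> I \<Longrightarrow> Y \<in> S i \<Longrightarrow> prob {\<omega>\<in>space M. \<bar>Y \<omega>\<bar> > c i} \<le> e"
    by metis
  define C where "C = (\<Sum>i\<in>I. \<bar>c i\<bar>)"
  have "prob {\<omega>\<in>space M. \<bar>Y \<omega>\<bar> > C} \<le> e" if "i \<in> I" "Y \<in> S i" for i Y
  proof -
    have "c i \<le> C"
      unfolding C_def using assms(1) that(1) member_le_sum[of i I "\<lambda>i. \<bar>c i\<bar>"] by simp
    moreover have [measurable]: "Y \<in> borel_measurable M"
      using assms(3) that by blast
    ultimately have "prob {\<omega>\<in>space M. \<bar>Y \<omega>\<bar> > C} \<le> prob {\<omega>\<in>space M. \<bar>Y \<omega>\<bar> > c i}"
      by (intro finite_measure_mono) auto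
    with c[OF that] show ?thesis by simp
  qed
  then show "\<exists>C. \<forall>Y\<in>(\<Union>i\<in>I. S i). prob {\<omega>\<in>space M. \<bar>Y \<omega>\<bar> > C} \<le> e"
    by blast
qed

lemma sets_Collect_notin_finite:
  fixes \<tau> :: "'a \<Rightarrow> 'b::t1_space"
  assumes "\<tau> \<in> borel_measurable M" and "finite T"
  shows "{\<omega>\<in>space M. \<tau> \<omega> \<notin> T} \<in> sets M"
proof -
  have "open (- T)"
    using assms(2) by (intro open_Compl finite_imp_closed)
  moreover have "{\<omega>\<in>space M. \<tau> \<omega> \<notin> T} = \<tau> -` (- T) \<inter> space M"
    by auto
  ultimately show ?thesis
    using assms(1) by auto
qed

lemma countable_range_prob_notin_finite_less:
  fixes \<tau> :: "'a \<Rightarrow> 'b::t1_space"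
  assumes [measurable]: "\<tau> \<in> borel_measurable M"
    and "countable (\<tau> ` space M)" and "e > 0"
  obtains T where "finite T" "T \<subseteq> \<tau> ` space M" "prob {\<omega>\<in>space M. \<tau> \<omega> \<notin> T} < e"
proof -
  define f where "f = from_nat_into (\<tau> ` space M)"
  have range_f: "range f = \<tau> ` space M"
    unfolding f_def using range_from_nat_into[OF _ assms(2)] not_empty by blast
  define A where "A n = {\<omega>\<in>space M. \<tau> \<omega> \<notin> f ` {..<n}}" for n
  have A_sets: "range A \<subseteq> sets M"
    unfolding A_def using sets_Collect_notin_finite[OF assms(1)] by auto
  have "decseq A"
    unfolding A_def decseq_def by auto
  moreover have "(\<Inter>n. A n) = {}"
  proof -
    have "\<omega> \<notin> A (Suc i)" if "\<tau> \<omega> = f i" for \<omega> i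
      using that unfolding A_def by auto
    moreover have "\<exists>i. \<tau> \<omega> = f i" if "\<omega> \<in> space M" for \<omega>
      using range_f that by (metis image_eqI rangeE)
    ultimately show ?thesis
      unfolding A_def by blast
  qed
  ultimately have "(\<lambda>n. prob (A n)) \<longlonglongrightarrow> 0"
    using finite_Lim_measure_decseq[OF A_sets] by simp
  then obtain N where "prob (A N) < e"
    using assms(3) LIMSEQ_D[of "\<lambda>n. prob (A n)" 0 e] by force
  moreover have "f ` {..<N} \<subseteq> \<tau> ` space M"
    using range_f by auto
  ultimately show ?thesis
    using that[of "f ` {..<N}"] unfolding A_def by blast
qed

lemma bounded_L0_at_countable_time:
  fixes \<tau> :: "'a \<Rightarrow> 'b::t1_space" and \<Y> :: "('b \<Rightarrow> 'a \<Rightarrow> real) set"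
  assumes [measurable]: "\<tau> \<in> borel_measurable M"
    and "countable (\<tau> ` space M)"
    and "\<And>t. t \<in> \<tau> ` space M \<Longrightarrow> bounded_L0 M {Y t | Y. Y \<in> \<Y>}"
    and "\<And>t Y. t \<in> \<tau> ` space M \<Longrightarrow> Y \<in> \<Y> \<Longrightarrow> Y t \<in> borel_measurable M"
  shows "bounded_L0 M {(\<lambda>\<omega>. Y (\<tau> \<omega>) \<omega>) | Y. Y \<in> \<Y>}"
  unfolding bounded_L0_def
proof (intro allI impI)
  fix e :: real assume "e > 0"
  then obtain T where T: "finite T" "T \<subseteq> \<tau> ` space M"
    and tail: "prob {\<omega>\<in>space M. \<tau> \<omega> \<notin> T} < e / 2"
    using countable_range_prob_notin_finite_less[OF assms(1,2), of "e / 2"] by auto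
  define d where "d = e / (2 * (card T + 1))"
  have "d > 0"
    unfolding d_def using \<open>e > 0\<close> by simp
  moreover have "bounded_L0 M (\<Union>t\<in>T. {Y t | Y. Y \<in> \<Y>})"
    using T assms(3,4) by (intro bounded_L0_UN_finite) auto
  ultimately obtain C
    where C: "\<And>t Y. t \<in> T \<Longrightarrow> Y \<in> \<Y> \<Longrightarrow> prob {\<omega>\<in>space M. \<bar>Y t \<omega>\<bar> > C} \<le> d"
    unfolding bounded_L0_def by blast
  have "prob {\<omega>\<in>space M. \<bar>Y (\<tau> \<omega>) \<omega>\<bar> > C} \<le> e" if Y: "Y \<in> \<Y>" for Y
  proof -
    define B where "B t = {\<omega>\<in>space M. \<bar>Y t \<omega>\<bar> > C}" for t
    have B_sets: "B t \<in> sets M" if "t \<in> T" for t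
      using assms(4)[OF _ Y] T(2) that unfolding B_def by (simp add: subset_eq)
    have avoid_sets: "{\<omega>\<in>space M. \<tau> \<omega> \<notin> T} \<in> sets M"
      using sets_Collect_notin_finite[OF assms(1) T(1)] .
    have "{\<omega>\<in>space M. \<bar>Y (\<tau> \<omega>) \<omega>\<bar> > C} \<subseteq> {\<omega>\<in>space M. \<tau> \<omega> \<notin> T} \<union> (\<Union>t\<in>T. B t)"
      unfolding B_def by auto
    then have "prob {\<omega>\<in>space M. \<bar>Y (\<tau> \<omega>) \<omega>\<bar> > C}
        \<le> prob ({\<omega>\<in>space M. \<tau> \<omega> \<notin> T} \<union> (\<Union>t\<in>T. B t))"
      using avoid_sets B_sets T(1) by (intro finite_measure_mono) auto
    also have "\<dots> \<le> prob {\<omega>\<in>space M. \<tau> \<omega> \<notin> T} + prob (\<Union>t\<in>T. B t)"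
      using avoid_sets B_sets T(1) by (intro measure_Un_le) auto
    also have "prob (\<Union>t\<in>T. B t) \<le> (\<Sum>t\<in>T. prob (B t))"
      using B_sets T(1) by (intro finite_measure_subadditive_finite) auto
    also have "\<dots> \<le> card T * d"
      using C[OF _ Y] sum_bounded_above[of T "\<lambda>t. prob (B t)" d] unfolding B_def by auto
    also have "card T * d \<le> e / 2"
      using \<open>e > 0\<close> unfolding d_def by (simp add: field_simps)
    finally show ?thesis
      using tail by simp
  qed
  then show "\<exists>C. \<forall>Z\<in>{(\<lambda>\<omega>. Y (\<tau> \<omega>) \<omega>) | Y. Y \<in> \<Y>}. prob {\<omega>\<in>space M. \<bar>Z \<omega>\<bar> > C} \<le> e"
    by blast
qed

end

lemma set_of_processes_adapted:
  assumes "set_of_processes M F \<X>" and "X \<in> \<X>" and "t \<ge> 0"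
  shows "X t \<in> borel_measurable (F t)"
  using assms unfolding set_of_processes_def by blast

lemma usual_filtered_prob_space_adapted_measurable:
  assumes "usual_filtered_prob_space M F" and "t \<ge> 0" and "f \<in> borel_measurable (F t)"
  shows "f \<in> borel_measurable M"
proof -
  have "\<forall>t\<ge>0. space (F t) = space M \<and> sets (F t) \<subseteq> sets M"
    using assms(1) unfolding usual_filtered_prob_space_def by (elim conjE)
  then have "subalgebra M (F t)"
    using assms(2) unfolding subalgebra_def by simp
  then show ?thesis
    using assms(3) measurable_from_subalg by blast
qed

theorem lemma2p2:
  fixes M :: "'a measure" and F :: "real \<Rightarrow> 'a measure"
    and \<X> :: "(real \<Rightarrow> 'a \<Rightarrow> real) set" and \<tau> :: "'a \<Rightarrow> real"
  assumes "usual_filtered_prob_space M F"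
    and "set_of_processes M F \<X>"
    and "NUPBR_loc M \<X>"
    and "\<tau> \<in> borel_measurable M"
    and "\<forall>\<omega>\<in>space M. 0 \<le> \<tau> \<omega>"
    and "countable (\<tau> ` space M)"
  shows "bounded_L0 M {(\<lambda>\<omega>. X (\<tau> \<omega>) \<omega>) | X. X \<in> \<X>}"
proof -
  interpret prob_space M
    using assms(1) unfolding usual_filtered_prob_space_def by blast
  have nonneg: "t \<ge> 0" if "t \<in> \<tau> ` space M" for t
    using assms(5) that by auto
  have NUPBR: "\<forall>t\<ge>0. bounded_L0 M {X t | X. X \<in> \<X>}"
    using assms(3) unfolding NUPBR_loc_def .
  show ?thesis
  proof (rule bounded_L0_at_countable_time[where \<tau> = \<tau> and \<Y> = \<X>, OF assms(4,6)])
    fix t assume "t \<in> \<tau> ` space M"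
    then show "bounded_L0 M {X t | X. X \<in> \<X>}"
      using NUPBR nonneg by simp
  next
    fix t X assume t: "t \<in> \<tau> ` space M" and "X \<in> \<X>"
    then have "X t \<in> borel_measurable (F t)"
      using set_of_processes_adapted[OF assms(2)] nonneg by simp
    with nonneg[OF t] show "X t \<in> borel_measurable M"
      by (rule usual_filtered_prob_space_adapted_measurable[OF assms(1)])
  qed
qed

end
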